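(* For $\alpha>1$, the function $r_\alpha(p)=\frac{1}{\alpha-1}\log\left(p^\alpha(1-p)^{1-\alpha}+(1-p)^\alpha p^{1-\alpha}\right)$ for $0\le p\le1$ is convex.
   Context: $\alpha>1$ is a real number; $r_\alpha$ may take the value $+\infty$ at $p\in\{0,1\}$. *)

theory Defs
  imports Complex_Main "HOL-Library.Extended_Real"
begin

text \<open>The extended-real valued function r_alpha on [0,1]; at the endpoints
  p = 0 and p = 1 the inner sum contains 0 powr (1 - alpha) with 1 - alpha < 0,
  i.e. the value +infinity, so r_alpha takes the value +infinity there.\<close>
definition r_alpha :: "real \<Rightarrow> real \<Rightarrow> ereal" where
  "r_alpha \<alpha> p =
     (if p = 0 \<or> p = 1 then \<infinity>
      else ereal (1 / (\<alpha> - 1) *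
        ln (p powr \<alpha> * (1 - p) powr (1 - \<alpha>) + (1 - p) powr \<alpha> * p powr (1 - \<alpha>))))"

end

theory Submission imports Defs "HOL-Analysis.Analysis" begin

text \<open>With b = \<alpha> - 1 > 0 and q = 1 - p, on 0 < p < 1 the function equals
  ln (p^(2b+1) + q^(2b+1)) / b - ln p - ln q. Its second derivative, multiplied by a positive
  factor, becomes a polynomial in p, q, A = p^(2b), B = q^(2b), which is a sum of a manifestly
  nonnegative term and two terms that are nonnegative by the weighted AM-GM inequality
  (b + 1) u^b v \<le> b u^(b+1) + v^(b+1) for {u, v} = {p^2, q^2}. At the endpoints the function
  is \<infinity>, which never violates the convexity inequality.\<close>

lemma powr_weighted_am_gm:
  fixes u v b :: real
  assumes "u > 0" "v > 0" "b > 0"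
  shows "(b + 1) * (u powr b * v) \<le> b * u powr (b + 1) + v powr (b + 1)"
proof -
  have "(u powr (b + 1)) powr (b / (b + 1)) * (v powr (b + 1)) powr (1 / (b + 1))
        \<le> b / (b + 1) * u powr (b + 1) + 1 / (b + 1) * v powr (b + 1)"
    using assms by (intro Youngs_inequality_0) (auto simp: field_simps)
  moreover have "(u powr (b + 1)) powr (b / (b + 1)) * (v powr (b + 1)) powr (1 / (b + 1))
      = u powr b * v"
    using assms by (simp add: powr_powr)
  ultimately have "(b + 1) * (u powr b * v)
      \<le> (b + 1) * (b / (b + 1) * u powr (b + 1) + 1 / (b + 1) * v powr (b + 1))"
    using assms by (intro mult_left_mono) auto
  also have "\<dots> = b * u powr (b + 1) + v powr (b + 1)"
    using assms by (simp add: distrib_left)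
  finally show ?thesis .
qed

lemma second_derivative_numerator_nonneg:
  fixes p q A B b :: real
  assumes "p > 0" "q > 0" "A > 0" "B > 0" "b > 0"
    and "(b + 1) * (A * q\<^sup>2) \<le> b * A * p\<^sup>2 + B * q\<^sup>2"
    and "(b + 1) * (B * p\<^sup>2) \<le> b * B * q\<^sup>2 + A * p\<^sup>2"
  shows "0 \<le> 2*b*(2*b + 1)*(A*q + B*p)*(p*A + q*B)*p*q - (2*b + 1)\<^sup>2*(A - B)\<^sup>2*p\<^sup>2*q\<^sup>2
              + b*(p*A + q*B)\<^sup>2*(p\<^sup>2 + q\<^sup>2)"
proof -
  have "2*b*(2*b + 1)*(A*q + B*p)*(p*A + q*B)*p*q - (2*b + 1)\<^sup>2*(A - B)\<^sup>2*p\<^sup>2*q\<^sup>2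
          + b*(p*A + q*B)\<^sup>2*(p\<^sup>2 + q\<^sup>2)
      = A*p\<^sup>2 * (b*A*p\<^sup>2 + B*q\<^sup>2 - (b + 1)*(A*q\<^sup>2))
          + B*q\<^sup>2 * (b*B*q\<^sup>2 + A*p\<^sup>2 - (b + 1)*(B*p\<^sup>2))
          + 4*b*(b + 1)*A*B*p*q*(p + q)\<^sup>2"
    by (simp add: algebra_simps power2_eq_square)
  also have "\<dots> \<ge> 0"
    using assms by (intro add_nonneg_nonneg mult_nonneg_nonneg) auto
  finally show ?thesis .
qed

definition power_sum :: "real \<Rightarrow> real \<Rightarrow> real" where
  "power_sum b x = x powr (2*b + 1) + (1 - x) powr (2*b + 1)"

definition r_real :: "real \<Rightarrow> real \<Rightarrow> real" where
  "r_real b x = ln (power_sum b x) / b - ln x - ln (1 - x)"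

definition r_real_deriv :: "real \<Rightarrow> real \<Rightarrow> real" where
  "r_real_deriv b x =
     (2*b + 1) * (x powr (2*b) - (1 - x) powr (2*b)) / (b * power_sum b x) - 1/x + 1/(1 - x)"

definition r_real_deriv2 :: "real \<Rightarrow> real \<Rightarrow> real" where
  "r_real_deriv2 b x =
     ((2*b + 1) * (2*b) * (x powr (2*b - 1) + (1 - x) powr (2*b - 1)) * power_sum b x
       - ((2*b + 1) * (x powr (2*b) - (1 - x) powr (2*b)))\<^sup>2) / (b * (power_sum b x)\<^sup>2)
     + 1/x\<^sup>2 + 1/(1 - x)\<^sup>2"

lemma power_sum_pos: "0 < x \<Longrightarrow> x < 1 \<Longrightarrow> power_sum b x > 0"
  unfolding power_sum_def by (simp add: add_pos_pos)

lemma has_real_derivative_power_sum: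
  "0 < x \<Longrightarrow> x < 1 \<Longrightarrow>
     (power_sum b has_real_derivative (2*b + 1) * (x powr (2*b) - (1 - x) powr (2*b))) (at x)"
  unfolding power_sum_def[abs_def]
  by (auto intro!: derivative_eq_intros simp: algebra_simps)

lemma has_real_derivative_r_real:
  assumes "b > 0" "0 < x" "x < 1"
  shows "(r_real b has_real_derivative r_real_deriv b x) (at x)"
  unfolding r_real_def[abs_def] using assms power_sum_pos[of x b]
  by (auto intro!: derivative_eq_intros has_real_derivative_power_sum
      simp: r_real_deriv_def field_simps)

lemma has_real_derivative_r_real_deriv:
  assumes "b > 0" "0 < x" "x < 1"
  shows "(r_real_deriv b has_real_derivative r_real_deriv2 b x) (at x)"
  unfolding r_real_deriv_def[abs_def] using assms power_sum_pos[of x b]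
  by (auto intro!: derivative_eq_intros has_real_derivative_power_sum
      simp: r_real_deriv2_def field_simps power2_eq_square)

lemma r_real_deriv2_nonneg:
  assumes b: "b > 0" and x: "0 < x" "x < 1"
  shows "r_real_deriv2 b x \<ge> 0"
proof -
  define q where "q = 1 - x"
  define A where "A = x powr (2*b)"
  define B where "B = q powr (2*b)"
  have q: "q > 0" using x by (simp add: q_def)
  have A: "A > 0" and B: "B > 0" using x q by (simp_all add: A_def B_def)
  have S: "power_sum b x = x*A + q*B"
    unfolding power_sum_def A_def B_def q_def[symmetric] using x q by (simp add: powr_add)
  have "x\<^sup>2 > 0" "q\<^sup>2 > 0" using x q by simp_all
  then have "(b + 1) * ((x\<^sup>2) powr b * q\<^sup>2) \<le> b * ((x\<^sup>2) powr b * x\<^sup>2) + (q\<^sup>2) powr b * q\<^sup>2"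
       "(b + 1) * ((q\<^sup>2) powr b * x\<^sup>2) \<le> b * ((q\<^sup>2) powr b * q\<^sup>2) + (x\<^sup>2) powr b * x\<^sup>2"
    using b powr_weighted_am_gm by (simp_all add: powr_add)
  moreover have "(x\<^sup>2) powr b = A" "(q\<^sup>2) powr b = B"
    unfolding A_def B_def using x q powr_powr[of x 2 b] powr_powr[of q 2 b] by simp_all
  ultimately have "(b + 1) * (A * q\<^sup>2) \<le> b * A * x\<^sup>2 + B * q\<^sup>2"
                  "(b + 1) * (B * x\<^sup>2) \<le> b * B * q\<^sup>2 + A * x\<^sup>2"
    by (simp_all add: mult.assoc)
  then have numerator: "0 \<le> 2*b*(2*b + 1)*(A*q + B*x)*(x*A + q*B)*x*q
      - (2*b + 1)\<^sup>2*(A - B)\<^sup>2*x\<^sup>2*q\<^sup>2 + b*(x*A + q*B)\<^sup>2*(x\<^sup>2 + q\<^sup>2)"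
    using x q A B b by (intro second_derivative_numerator_nonneg)
  have S_pos: "x*A + q*B > 0"
    using x q A B by (simp add: add_pos_pos)
  have lower_powers: "x powr (2*b - 1) = A/x" "q powr (2*b - 1) = B/q"
    unfolding A_def B_def using x q by (simp_all add: powr_diff)
  have "r_real_deriv2 b x = (2*b*(2*b + 1)*(A*q + B*x)*(x*A + q*B)*x*q
      - (2*b + 1)\<^sup>2*(A - B)\<^sup>2*x\<^sup>2*q\<^sup>2 + b*(x*A + q*B)\<^sup>2*(x\<^sup>2 + q\<^sup>2)) / (b*(x*A + q*B)\<^sup>2*x\<^sup>2*q\<^sup>2)"
    unfolding r_real_deriv2_def q_def[symmetric] lower_powers A_def[symmetric] B_def[symmetric] S
    using x q b S_pos by (simp add: divide_simps) (simp add: algebra_simps power2_eq_square)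
  then show ?thesis
    using numerator b by simp
qed

lemma convex_on_r_real: "b > 0 \<Longrightarrow> convex_on {0<..<1} (r_real b)"
  by (rule f''_ge0_imp_convex[where f' = "r_real_deriv b" and f'' = "r_real_deriv2 b"])
     (auto intro: has_real_derivative_r_real has_real_derivative_r_real_deriv r_real_deriv2_nonneg)

lemma r_alpha_eq_r_real:
  assumes "\<alpha> > 1" "0 < x" "x < 1"
  shows "r_alpha \<alpha> x = ereal (r_real (\<alpha> - 1) x)"
proof -
  define b where "b = \<alpha> - 1"
  define q where "q = 1 - x"
  have b: "b > 0" and q: "q > 0" using assms by (simp_all add: b_def q_def)
  have "x powr \<alpha> * q powr (1 - \<alpha>) + q powr \<alpha> * x powr (1 - \<alpha>)
      = power_sum b x * (x * q) powr (- b)"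
    unfolding power_sum_def q_def[symmetric] b_def
    by (simp add: powr_mult algebra_simps flip: powr_add)
  moreover have "ln (power_sum b x * (x * q) powr (- b)) = ln (power_sum b x) - b * (ln x + ln q)"
    using power_sum_pos[of x b] assms q by (simp add: ln_mult ln_powr)
  ultimately show ?thesis
    unfolding r_alpha_def r_real_def b_def[symmetric] q_def[symmetric]
    using assms b by (simp add: field_simps)
qed

lemma convex_ineq_infinite_at_endpoints:
  fixes f :: "real \<Rightarrow> ereal" and g :: "real \<Rightarrow> real"
  assumes g: "convex_on {a<..<b} g"
    and f: "\<And>x. a < x \<Longrightarrow> x < b \<Longrightarrow> f x = ereal (g x)" "f a = \<infinity>" "f b = \<infinity>"
    and x: "x \<in> {a..b}" and y: "y \<in> {a..b}" and t: "t \<in> {0..1}"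
  shows "f (t * x + (1 - t) * y) \<le> ereal t * f x + ereal (1 - t) * f y"
proof -
  consider "t = 0" | "t = 1" | "0 < t" "t < 1" "x \<in> {a, b} \<or> y \<in> {a, b}"
    | "0 < t" "t < 1" "x \<in> {a<..<b}" "y \<in> {a<..<b}"
    using x y t by fastforce
  then show ?thesis
  proof cases
    case 3
    have "f z \<noteq> -\<infinity>" if "z \<in> {a..b}" for z
      using that f by (cases "z = a \<or> z = b") auto
    moreover have "f x = \<infinity> \<or> f y = \<infinity>"
      using 3 f by auto
    ultimately have right_infinite: "ereal t * f x + ereal (1 - t) * f y = \<infinity>"
      using 3 x y by (cases "f x"; cases "f y") auto
    show ?thesis unfolding right_infinite by simp
  next
    case 4
    then have "g (t * x + (1 - t) * y) \<le> t * g x + (1 - t) * g y"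
      using convex_onD[OF g, of "1 - t" x y] by simp
    moreover have "t * x + (1 - t) * y \<in> {a<..<b}"
      using 4 convexD[OF convex_real_interval(8), of x a b y t "1 - t"] by simp
    ultimately show ?thesis using 4 f by simp
  \<comment> \<open>the cases t = 0 and t = 1 rely on the convention 0 * \<infinity> = 0 in ereal\<close>
  qed (simp_all add: zero_ereal_def[symmetric] one_ereal_def[symmetric])
qed

theorem lemma1:
  fixes \<alpha> :: real
  assumes "\<alpha> > 1"
  shows "\<forall>x\<in>{0..1}. \<forall>y\<in>{0..1}. \<forall>t\<in>{0..1::real}.
           r_alpha \<alpha> (t * x + (1 - t) * y)
             \<le> ereal t * r_alpha \<alpha> x + ereal (1 - t) * r_alpha \<alpha> y"
proof (intro ballI)
  fix x y t :: real
  assume "x \<in> {0..1}" "y \<in> {0..1}" "t \<in> {0..1}"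
  moreover have "convex_on {0<..<1} (r_real (\<alpha> - 1))"
    using assms by (simp add: convex_on_r_real)
  moreover have "\<And>x. 0 < x \<Longrightarrow> x < 1 \<Longrightarrow> r_alpha \<alpha> x = ereal (r_real (\<alpha> - 1) x)"
    using assms by (rule r_alpha_eq_r_real)
  ultimately show "r_alpha \<alpha> (t * x + (1 - t) * y)
      \<le> ereal t * r_alpha \<alpha> x + ereal (1 - t) * r_alpha \<alpha> y"
    by (intro convex_ineq_infinite_at_endpoints) (auto simp: r_alpha_def)
qed

end
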